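(* For every hypergraph $\mathcal{C}$ we have $\operatorname{conn_h}(\operatorname{Ind}(\mathcal{C}))\ge \psi(\mathcal{C})-2$.
   Context: A hypergraph $\mathcal{C}$ on a finite vertex set $V$ is a family of pairwise incomparable subsets of $V$ (its edges), each of cardinality at least $2$; vertices lying in no edge are allowed. The independence complex $\operatorname{Ind}(\mathcal{C})$ is the simplicial complex on $V$ whose faces are the subsets of $V$ containing no edge of $\mathcal{C}$ (if $V=\emptyset$ it is $\{\emptyset\}$). For an edge $F$: $\mathcal{C}-F$ is the hypergraph on $V$ with edge set $\mathcal{C}\setminus\{F\}$; $N_{\mathcal{C}}(F)=\bigcup\{E\setminus F : E\in\mathcal{C},\ |E\setminus F|=1\}$; and $\mathcal{C}:F$ is the hypergraph on $V\setminus(F\cup N_{\mathcal{C}}(F))$ whose edges are the members of cardinality at least $2$ among the inclusion-minimal members of the family $\{E\setminus F : E\in \mathcal{C}-F\}$. The number $\psi(\mathcal{C})\in\mathbb{Z}_{\ge 0}\cup\{\infty\}$ is defined recursively: $\psi(\mathcal{C})=0$ if $V=\emptyset$; $\psi(\mathcal{C})=\infty$ if $V\neq\emptyset$ and $\mathcal{C}$ has no edges; otherwise $\psi(\mathcal{C})=\max_{F\in\mathcal{C}}\min\{\psi(\mathcal{C}-F),\ \psi(\mathcal{C}:F)+|F|-1\}$. The homological connectivity $\operatorname{conn_h}(\Delta)$ is the largest integer $k$ such that $\tilde H_i(\Delta;\mathbb{Z})=0$ for all $i\le k$ ($\infty$ if all vanish; in particular $\operatorname{conn_h}(\{\emptyset\})=-2$).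 *)

theory Defs
  imports Main "HOL-Library.Extended_Real"
begin

definition is_hypergraph :: "'a set \<Rightarrow> 'a set set \<Rightarrow> bool" where
  "is_hypergraph V C \<longleftrightarrow> finite V \<and> (\<forall>E\<in>C. E \<subseteq> V \<and> 2 \<le> card E)
      \<and> (\<forall>E\<in>C. \<forall>E'\<in>C. E \<subseteq> E' \<longrightarrow> E = E')"

definition Ind :: "'a set \<Rightarrow> 'a set set \<Rightarrow> 'a set set" where
  "Ind V C = {\<sigma>. \<sigma> \<subseteq> V \<and> (\<forall>E\<in>C. \<not> E \<subseteq> \<sigma>)}"

definition nbhd :: "'a set set \<Rightarrow> 'a set \<Rightarrow> 'a set" where
  "nbhd C F = \<Union>{E - F | E. E \<in> C \<and> card (E - F) = 1}"

definition colon_edges :: "'a set set \<Rightarrow> 'a set \<Rightarrow> 'a set set" where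
  "colon_edges C F =
     (let fam = (\<lambda>E. E - F) ` (C - {F})
      in {M \<in> fam. (\<forall>M'\<in>fam. \<not> M' \<subset> M) \<and> 2 \<le> card M})"

definition colon_vertices :: "'a set \<Rightarrow> 'a set set \<Rightarrow> 'a set \<Rightarrow> 'a set" where
  "colon_vertices V C F = V - (F \<union> nbhd C F)"

lemma card_colon_edges_le:
  assumes "finite C" "F \<in> C"
  shows "card (colon_edges C F) < card C"
proof -
  have "colon_edges C F \<subseteq> (\<lambda>E. E - F) ` (C - {F})"
    unfolding colon_edges_def Let_def by blast
  hence "card (colon_edges C F) \<le> card ((\<lambda>E. E - F) ` (C - {F}))"
    using assms by (intro card_mono) auto
  also have "\<dots> \<le> card (C - {F})" using assms by (intro card_image_le) auto
  also have "\<dots> < card C" using assms by (meson card_Diff1_less)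
  finally show ?thesis .
qed

text \<open>Arguments that are not (finite) set systems
of subsets of V of size at least 2 get the junk value 0; such arguments never arise
from hypergraphs.\<close>
function psi :: "'a set \<Rightarrow> 'a set set \<Rightarrow> enat" where
  "psi V C =
     (if \<not> (finite V \<and> (\<forall>E\<in>C. E \<subseteq> V \<and> 2 \<le> card E)) then 0
      else if V = {} then 0
      else if C = {} then \<infinity>
      else Max ((\<lambda>F. min (psi V (C - {F}))
                          (psi (colon_vertices V C F) (colon_edges C F) + enat (card F - 1))) ` C))"
  by auto
termination
proof (relation "measure (\<lambda>(V, C). card V + card C)", goal_cases)
  case 1 then show ?case by simp
next
  case (2 V C F)
  have fC: "finite C" using 2 by (meson finite_Pow_iff finite_subset subsetI PowI)
  have "card (C - {F}) < card C" using fC 2 by (intro card_Diff1_less) auto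
  then show ?case by simp
next
  case (3 V C F)
  have fC: "finite C" using 3 by (meson finite_Pow_iff finite_subset subsetI PowI)
  have FV: "F \<subseteq> V" "2 \<le> card F" using 3 by auto
  then have "F \<noteq> {}" by auto
  then have "colon_vertices V C F \<subset> V" using FV unfolding colon_vertices_def by blast
  then have "card (colon_vertices V C F) < card V" using 3 by (simp add: psubset_card_mono)
  moreover have "card (colon_edges C F) < card C" using card_colon_edges_le fC 3 by blast
  ultimately show ?case by simp
qed

text \<open>A simplicial complex K is given by its set of faces (including the empty face).
We fix a linear order on vertices to orient simplices.  An i-chain is an integer-valued
function on faces, supported on faces of dimension i (cardinality i+1); the empty face
has dimension -1, giving the augmented (reduced) chain complex.\<close>
definition is_chain :: "'a set set \<Rightarrow> int \<Rightarrow> ('a set \<Rightarrow> int) \<Rightarrow> bool" where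
  "is_chain K i c \<longleftrightarrow> (\<forall>\<sigma>. c \<sigma> \<noteq> 0 \<longrightarrow> \<sigma> \<in> K \<and> finite \<sigma> \<and> int (card \<sigma>) = i + 1)"

definition bd :: "'a::linorder set set \<Rightarrow> ('a set \<Rightarrow> int) \<Rightarrow> ('a set \<Rightarrow> int)" where
  "bd K c \<sigma> = (\<Sum>v \<in> \<Union>K - \<sigma>. (-1) ^ card {u \<in> \<sigma>. u < v} * c (insert v \<sigma>))"

definition reduced_homology_trivial :: "'a::linorder set set \<Rightarrow> int \<Rightarrow> bool" where
  "reduced_homology_trivial K i \<longleftrightarrow>
     (\<forall>z. is_chain K i z \<and> bd K z = (\<lambda>_. 0) \<longrightarrow>
          (\<exists>c. is_chain K (i + 1) c \<and> bd K c = z))"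

definition conn_h :: "'a::linorder set set \<Rightarrow> ereal" where
  "conn_h K = Sup {ereal (real_of_int k) | k. \<forall>i\<le>k. reduced_homology_trivial K i}"

end

theory Submission
  imports Defs
begin

text \<open>For an edge F, Ind(C) consists of the faces of Ind(C - F) not containing F, and the link
of F in Ind(C - F) is Ind(C:F). An i-cycle of Ind(C) bounds a chain c of Ind(C - F); the part
of c on the star of F, transported to the link, is a cycle of degree i + 1 - |F| there, and a
filling of it transported back to the star corrects c into a chain of Ind(C). So the reduced
homology of Ind(C) vanishes in degree i as soon as that of Ind(C - F) does in degree i and that
of Ind(C:F) in degree i + 1 - |F|. Induction along the recursion defining psi, with the full
simplex (a cone) as base case, gives the bound.\<close>

definition incidence_sign :: "'a::linorder set \<Rightarrow> 'a \<Rightarrow> int" where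
  "incidence_sign s v = (-1) ^ card {u \<in> s. u < v}"

section \<open>Chains and boundaries\<close>

text \<open>Boundaries are taken with respect to a fixed finite vertex set V rather than the
vertices of a particular complex, so chains of different subcomplexes can be compared.\<close>
definition boundary :: "'a::linorder set \<Rightarrow> ('a set \<Rightarrow> int) \<Rightarrow> 'a set \<Rightarrow> int" where
  "boundary V c s = (\<Sum>v \<in> V - s. incidence_sign s v * c (insert v s))"

lemma incidence_sign_sq: "incidence_sign s v * incidence_sign s v = 1"
  by (simp add: incidence_sign_def flip: power_add)

lemma incidence_sign_insert:
  assumes "finite s" "v \<notin> s"
  shows "incidence_sign (insert v s) w = (if v < w then - incidence_sign s w else incidence_sign s w)"
proof (cases "v < w")
  case True
  then have "{u \<in> insert v s. u < w} = insert v {u \<in> s. u < w}" by auto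
  with True assms show ?thesis by (simp add: incidence_sign_def)
next
  case False
  then have "{u \<in> insert v s. u < w} = {u \<in> s. u < w}" by auto
  with False show ?thesis by (simp add: incidence_sign_def)
qed

lemma incidence_sign_Un:
  assumes "finite F" "finite r" "r \<inter> F = {}"
  shows "incidence_sign (F \<union> r) v = incidence_sign F v * incidence_sign r v"
proof -
  have "{u \<in> F \<union> r. u < v} = {u \<in> F. u < v} \<union> {u \<in> r. u < v}" by auto
  moreover have "card ({u \<in> F. u < v} \<union> {u \<in> r. u < v}) = card {u \<in> F. u < v} + card {u \<in> r. u < v}"
    using assms by (intro card_Un_disjoint) auto
  ultimately show ?thesis by (simp add: incidence_sign_def power_add)
qed

lemma is_chainD:
  assumes "is_chain K i c" "c s \<noteq> 0"
  shows "s \<in> K" "finite s" "int (card s) = i + 1"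
  using assms by (auto simp: is_chain_def)

lemma bd_eq_boundary: "bd K c = boundary (\<Union>K) c"
  by (simp add: bd_def boundary_def incidence_sign_def fun_eq_iff)

lemma boundary_restrict_vertices:
  assumes "finite V" "W \<subseteq> V" "\<And>t. c t \<noteq> 0 \<Longrightarrow> t \<subseteq> W"
  shows "boundary V c = boundary W c"
  unfolding boundary_def fun_eq_iff using assms
  by (intro allI sum.mono_neutral_right) auto

lemma bd_eq_boundary_of_chain:
  assumes "finite V" "K \<subseteq> Pow V" "is_chain K i c"
  shows "bd K c = boundary V c"
proof -
  have "boundary V c = boundary (\<Union>K) c"
    using assms by (intro boundary_restrict_vertices) (auto simp: is_chain_def)
  then show ?thesis by (simp add: bd_eq_boundary)
qed

lemma boundary_diff: "boundary V (\<lambda>s. f s - g s) s = boundary V f s - boundary V g s"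
  by (simp add: boundary_def sum_subtractf right_diff_distrib)

text \<open>The two ways of removing a pair of vertices contribute opposite signs.\<close>
lemma boundary_boundary:
  assumes "finite V" "\<And>t. c t \<noteq> 0 \<Longrightarrow> finite t"
  shows "boundary V (boundary V c) s = 0"
proof (cases "finite s")
  case False
  then have "c (insert w (insert v s)) = 0" for v w using assms(2) by (meson finite_insert)
  then show ?thesis by (simp add: boundary_def)
next
  case True
  define h where "h v w = (if v = w then 0 else incidence_sign s v *
      ((if v < w then -1 else 1) * incidence_sign s w) * c (insert w (insert v s)))" for v w
  have row: "incidence_sign s v * boundary V c (insert v s) = (\<Sum>w\<in>V - s. h v w)"
    if "v \<in> V - s" for v
  proof -
    have "(\<Sum>w\<in>V - s. h v w) = (\<Sum>w\<in>V - insert v s. h v w)"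
      using assms(1) by (intro sum.mono_neutral_right) (auto simp: h_def)
    also have "\<dots> = incidence_sign s v * boundary V c (insert v s)"
      using that True by (auto simp: boundary_def sum_distrib_left h_def incidence_sign_insert
          intro!: sum.cong split: if_splits)
    finally show ?thesis ..
  qed
  have antisym: "h v w = - h w v" for v w
    by (cases v w rule: linorder_cases) (auto simp: h_def insert_commute)
  have "(\<Sum>v\<in>V - s. \<Sum>w\<in>V - s. h v w) = (\<Sum>w\<in>V - s. \<Sum>v\<in>V - s. - h w v)"
    by (subst sum.swap) (intro sum.cong refl antisym)
  then have "(\<Sum>v\<in>V - s. \<Sum>w\<in>V - s. h v w) = 0"
    by (simp add: sum_negf)
  moreover have "boundary V (boundary V c) s = (\<Sum>v\<in>V - s. \<Sum>w\<in>V - s. h v w)"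
    unfolding boundary_def[of V "boundary V c"] by (rule sum.cong) (use row in auto)
  ultimately show ?thesis by simp
qed

lemma is_chain_boundary:
  assumes "\<And>s t. s \<in> K \<Longrightarrow> t \<subseteq> s \<Longrightarrow> t \<in> K" "is_chain K (k + 1) c"
  shows "is_chain K k (boundary V c)"
  unfolding is_chain_def
proof (intro allI impI)
  fix s assume "boundary V c s \<noteq> 0"
  then obtain v where v: "v \<in> V - s" "c (insert v s) \<noteq> 0"
    unfolding boundary_def by (metis (no_types, lifting) mult_zero_right sum.neutral)
  have "insert v s \<in> K" "finite (insert v s)" "int (card (insert v s)) = k + 2"
    using is_chainD[OF assms(2) v(2)] by auto
  with v assms(1) show "s \<in> K \<and> finite s \<and> int (card s) = k + 1"
    by auto
qed

lemma reduced_homology_trivial_below: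
  assumes "i \<le> -2"
  shows "reduced_homology_trivial K i"
proof -
  have "z = (\<lambda>_. 0)" if "is_chain K i z" for z :: "'a set \<Rightarrow> int"
    using that assms by (fastforce simp: is_chain_def)
  then show ?thesis
    unfolding reduced_homology_trivial_def
    by (auto intro!: exI[of _ "\<lambda>_. 0"] simp: is_chain_def bd_def)
qed

section \<open>The full simplex is acyclic\<close>

definition cone :: "'a::linorder \<Rightarrow> 'a set \<Rightarrow> ('a set \<Rightarrow> int) \<Rightarrow> 'a set \<Rightarrow> int" where
  "cone x V z t =
     (if x \<in> t \<and> t \<subseteq> V then incidence_sign (t - {x}) x * z (t - {x}) else 0)"

lemma boundary_cone:
  assumes "finite V" "x \<in> V" "s \<subseteq> V"
  shows "boundary V (cone x V z) s = z s - cone x V (boundary V z) s"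
proof (cases "x \<in> s")
  case False
  have "boundary V (cone x V z) s
      = incidence_sign s x * cone x V z (insert x s)
        + (\<Sum>v\<in>V - s - {x}. incidence_sign s v * cone x V z (insert v s))"
    unfolding boundary_def using assms False by (intro sum.remove) auto
  also have "(\<Sum>v\<in>V - s - {x}. incidence_sign s v * cone x V z (insert v s)) = 0"
    using False by (intro sum.neutral) (auto simp: cone_def)
  also have "cone x V z (insert x s) = incidence_sign s x * z s"
    using False assms by (simp add: cone_def)
  moreover have "cone x V (boundary V z) s = 0" using False by (simp add: cone_def)
  ultimately show ?thesis by (simp add: mult.assoc[symmetric] incidence_sign_sq)
next
  case True
  define r where "r = s - {x}"
  have r: "finite r" "x \<notin> r" "s = insert x r"
    using True assms finite_subset by (auto simp: r_def)
  let ?\<sigma> = "incidence_sign r x"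
  have "boundary V (cone x V z) s = (\<Sum>v\<in>V - s. - ?\<sigma> * (incidence_sign r v * z (insert v r)))"
    unfolding boundary_def
  proof (rule sum.cong[OF refl])
    fix v assume v: "v \<in> V - s"
    then have "v \<noteq> x" "v \<notin> r" "insert v s - {x} = insert v r" using r by auto
    then have "cone x V z (insert v s) = incidence_sign (insert v r) x * z (insert v r)"
      using v True assms by (simp add: cone_def)
    moreover have "incidence_sign s v = (if x < v then - incidence_sign r v else incidence_sign r v)"
      using incidence_sign_insert[OF r(1,2)] r(3) by simp
    moreover have "incidence_sign (insert v r) x = (if v < x then - ?\<sigma> else ?\<sigma>)"
      using incidence_sign_insert[OF r(1) \<open>v \<notin> r\<close>] by simp
    ultimately show "incidence_sign s v * cone x V z (insert v s)
        = - ?\<sigma> * (incidence_sign r v * z (insert v r))"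
      using \<open>v \<noteq> x\<close> by (cases v x rule: linorder_cases) (simp_all add: less_not_sym)
  qed
  also have "\<dots> = - ?\<sigma> * (boundary V z r - ?\<sigma> * z s)"
  proof -
    have "boundary V z r = ?\<sigma> * z (insert x r) + (\<Sum>v\<in>V - r - {x}. incidence_sign r v * z (insert v r))"
      unfolding boundary_def using assms r by (intro sum.remove) auto
    moreover have "V - r - {x} = V - s" using r by auto
    ultimately show ?thesis using r(3) by (simp add: sum_distrib_left)
  qed
  also have "\<dots> = (?\<sigma> * ?\<sigma>) * z s - ?\<sigma> * boundary V z r"
    by (simp add: algebra_simps)
  also have "\<dots> = z s - cone x V (boundary V z) s"
    using assms r by (simp add: cone_def incidence_sign_sq)
  finally show ?thesis .
qed

lemma reduced_homology_trivial_simplex: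
  assumes "finite V" "x \<in> V"
  shows "reduced_homology_trivial (Pow V) i"
  unfolding reduced_homology_trivial_def
proof (intro allI impI, elim conjE)
  fix z assume z: "is_chain (Pow V) i z" and cycle: "bd (Pow V) z = (\<lambda>_. 0)"
  have "is_chain (Pow V) (i + 1) (cone x V z)"
    unfolding is_chain_def
  proof (intro allI impI)
    fix t assume "cone x V z t \<noteq> 0"
    then have t: "x \<in> t" "t \<subseteq> V" "z (t - {x}) \<noteq> 0" by (auto simp: cone_def split: if_splits)
    from is_chainD[OF z t(3)] have "finite t" "int (card (t - {x})) = i + 1" by simp_all
    moreover from \<open>finite t\<close> t(1) have "card t = Suc (card (t - {x}))"
      by (rule card_Suc_Diff1[symmetric])
    then have "int (card t) = int (card (t - {x})) + 1" by simp
    ultimately show "t \<in> Pow V \<and> finite t \<and> int (card t) = i + 1 + 1"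
      using t(2) by simp
  qed
  moreover have "boundary V (cone x V z) s = z s" for s
  proof (cases "s \<subseteq> V")
    case True
    have "boundary V z = (\<lambda>_. 0)" using cycle by (simp add: bd_eq_boundary)
    then show ?thesis using boundary_cone[OF assms True, of z] by (simp add: cone_def)
  next
    case False
    then show ?thesis using is_chainD(1)[OF z, of s] by (auto simp: boundary_def cone_def)
  qed
  ultimately show "\<exists>c. is_chain (Pow V) (i + 1) c \<and> bd (Pow V) c = z"
    by (auto simp: bd_eq_boundary fun_eq_iff)
qed

section \<open>Deletion and link of a set\<close>

definition deletion :: "'a set set \<Rightarrow> 'a set \<Rightarrow> 'a set set" where
  "deletion K F = {s \<in> K. \<not> F \<subseteq> s}"

definition link :: "'a set set \<Rightarrow> 'a set \<Rightarrow> 'a set set" where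
  "link K F = {t. t \<inter> F = {} \<and> F \<union> t \<in> K}"

text \<open>The sign is chosen so that transporting chains from the star of F to its link
commutes with the boundary.\<close>
definition link_sign :: "'a::linorder set \<Rightarrow> 'a set \<Rightarrow> int" where
  "link_sign F t = (\<Prod>u\<in>t. incidence_sign F u)"

definition link_chain :: "'a::linorder set \<Rightarrow> ('a set \<Rightarrow> int) \<Rightarrow> 'a set \<Rightarrow> int" where
  "link_chain F c t = (if t \<inter> F = {} then link_sign F t * c (F \<union> t) else 0)"

definition star_chain :: "'a::linorder set \<Rightarrow> ('a set \<Rightarrow> int) \<Rightarrow> 'a set \<Rightarrow> int" where
  "star_chain F u s = (if F \<subseteq> s then link_sign F (s - F) * u (s - F) else 0)"

lemma link_sign_sq: "link_sign F t * link_sign F t = 1"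
  by (simp add: link_sign_def incidence_sign_sq flip: prod.distrib)

lemma link_chain_star_chain: "t \<inter> F = {} \<Longrightarrow> link_chain F (star_chain F u) t = u t"
proof -
  assume "t \<inter> F = {}"
  then have "F \<union> t - F = t" by auto
  with \<open>t \<inter> F = {}\<close> show ?thesis
    by (simp add: link_chain_def star_chain_def mult.assoc[symmetric] link_sign_sq)
qed

lemma star_chain_link_chain: "F \<subseteq> s \<Longrightarrow> star_chain F (link_chain F c) s = c s"
proof -
  assume "F \<subseteq> s"
  then have "(s - F) \<inter> F = {}" "F \<union> (s - F) = s" by auto
  with \<open>F \<subseteq> s\<close> show ?thesis
    by (simp add: link_chain_def star_chain_def mult.assoc[symmetric] link_sign_sq)
qed

lemma boundary_link_chain:
  assumes V: "finite V" and F: "finite F" and c: "\<And>t. c t \<noteq> 0 \<Longrightarrow> finite t"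
  shows "boundary V (link_chain F c) r = link_chain F (boundary V c) r"
proof (cases "r \<inter> F = {}")
  case False
  then show ?thesis by (auto simp: boundary_def link_chain_def)
next
  case disjoint: True
  show ?thesis
  proof (cases "finite r")
    case False
    then have zero: "c t = 0" if "r \<subseteq> t" for t
      using c finite_subset that by blast
    have c_ins: "c (insert v (F \<union> r)) = 0" for v
      by (rule zero) auto
    then have "link_chain F c (insert v r) = 0" for v
      by (simp add: link_chain_def)
    with c_ins show ?thesis by (simp add: boundary_def link_chain_def)
  next
    case True
    have "boundary V (link_chain F c) r
        = (\<Sum>v\<in>V - (F \<union> r). incidence_sign r v * link_chain F c (insert v r))"
      unfolding boundary_def using V by (intro sum.mono_neutral_right) (auto simp: link_chain_def)
    also have "\<dots> = (\<Sum>v\<in>V - (F \<union> r).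
        link_sign F r * (incidence_sign (F \<union> r) v * c (insert v (F \<union> r))))"
      using True disjoint F
      by (intro sum.cong) (auto simp: link_chain_def link_sign_def incidence_sign_Un)
    also have "\<dots> = link_chain F (boundary V c) r"
      using disjoint by (simp add: link_chain_def boundary_def sum_distrib_left)
    finally show ?thesis .
  qed
qed

lemma is_chain_link_chain:
  assumes "finite F" "is_chain K j c"
  shows "is_chain (link K F) (j - int (card F)) (link_chain F c)"
  unfolding is_chain_def
proof (intro allI impI)
  fix t assume "link_chain F c t \<noteq> 0"
  then have t: "t \<inter> F = {}" "c (F \<union> t) \<noteq> 0" by (auto simp: link_chain_def split: if_splits)
  note Ft = is_chainD[OF assms(2) t(2)]
  then have "card (F \<union> t) = card F + card t" using t assms(1) by (intro card_Un_disjoint) auto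
  with Ft t show "t \<in> link K F \<and> finite t \<and> int (card t) = j - int (card F) + 1"
    by (auto simp: link_def)
qed

lemma is_chain_star_chain:
  assumes "finite F" "is_chain (link K F) j u"
  shows "is_chain K (j + int (card F)) (star_chain F u)"
  unfolding is_chain_def
proof (intro allI impI)
  fix s assume "star_chain F u s \<noteq> 0"
  then have s: "F \<subseteq> s" "u (s - F) \<noteq> 0" by (auto simp: star_chain_def split: if_splits)
  note sF = is_chainD[OF assms(2) s(2)]
  have "s = F \<union> (s - F)" using s(1) by auto
  moreover have "card (F \<union> (s - F)) = card F + card (s - F)"
    using assms(1) sF by (intro card_Un_disjoint) auto
  ultimately show "s \<in> K \<and> finite s \<and> int (card s) = j + int (card F) + 1"
    using sF assms(1) by (auto simp: link_def)
qed

lemma is_chain_diff: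
  assumes "is_chain K j c" "is_chain K j d"
  shows "is_chain K j (\<lambda>s. c s - d s)"
  unfolding is_chain_def
proof (intro allI impI)
  fix s assume "c s - d s \<noteq> 0"
  then have "c s \<noteq> 0 \<or> d s \<noteq> 0" by auto
  then show "s \<in> K \<and> finite s \<and> int (card s) = j + 1"
    using is_chainD[OF assms(1)] is_chainD[OF assms(2)] by blast
qed

lemma link_chain_star_chain_of_link:
  assumes "is_chain (link K F) j u"
  shows "link_chain F (star_chain F u) = u"
proof
  fix t
  show "link_chain F (star_chain F u) t = u t"
  proof (cases "t \<inter> F = {}")
    case False
    then have "u t = 0" using is_chainD(1)[OF assms, of t] by (auto simp: link_def)
    with False show ?thesis by (simp add: link_chain_def)
  qed (rule link_chain_star_chain)
qed

lemma star_correction: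
  assumes V: "finite V" and F: "finite F"
    and closed: "\<And>s t. s \<in> K \<Longrightarrow> t \<subseteq> s \<Longrightarrow> t \<in> K"
    and c: "is_chain K (i + 1) c"
    and u: "is_chain (link K F) (i + 1 - int (card F) + 1) u"
    and bu: "boundary V u = link_chain F c"
  defines "c' \<equiv> \<lambda>s. c s - boundary V (star_chain F u) s"
  shows "is_chain (deletion K F) (i + 1) c'" and "boundary V c' = boundary V c"
proof -
  define b where "b = star_chain F u"
  have b: "is_chain K (i + 1 + 1) b"
    using is_chain_star_chain[OF F u] by (simp add: b_def add.commute add.left_commute)
  have fin_b: "\<And>t. b t \<noteq> 0 \<Longrightarrow> finite t" using is_chainD(2)[OF b] .
  have "link_chain F (boundary V b) = boundary V (link_chain F b)"
    using boundary_link_chain[where c = b, OF V F fin_b] by (simp add: fun_eq_iff)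
  also have "\<dots> = link_chain F c"
    using link_chain_star_chain_of_link[OF u] bu by (simp add: b_def)
  finally have link_bb: "link_chain F (boundary V b) = link_chain F c" .
  have "is_chain K (i + 1) c'"
    unfolding c'_def b_def[symmetric] by (intro is_chain_diff c is_chain_boundary[OF closed b])
  moreover have "c' s = 0" if "F \<subseteq> s" for s
    using star_chain_link_chain[OF that, of c] star_chain_link_chain[OF that, of "boundary V b"]
    by (simp add: c'_def b_def[symmetric] link_bb)
  ultimately show "is_chain (deletion K F) (i + 1) c'"
    by (auto simp: is_chain_def deletion_def)
  show "boundary V c' = boundary V c"
    using boundary_boundary[where c = b, OF V fin_b]
    by (simp add: c'_def b_def[symmetric] boundary_diff fun_eq_iff)
qed

lemma reduced_homology_trivial_deletion:
  assumes V: "finite V" and F: "finite F" and K: "K \<subseteq> Pow V"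
    and closed: "\<And>s t. s \<in> K \<Longrightarrow> t \<subseteq> s \<Longrightarrow> t \<in> K"
    and acyclic: "reduced_homology_trivial K i"
    and acyclic_link: "reduced_homology_trivial (link K F) (i + 1 - int (card F))"
  shows "reduced_homology_trivial (deletion K F) i"
  unfolding reduced_homology_trivial_def
proof (intro allI impI, elim conjE)
  fix z assume z: "is_chain (deletion K F) i z" and cycle: "bd (deletion K F) z = (\<lambda>_. 0)"
  have D: "deletion K F \<subseteq> Pow V" and L: "link K F \<subseteq> Pow V"
    using K by (auto simp: deletion_def link_def)
  have zK: "is_chain K i z" using z by (auto simp: is_chain_def deletion_def)
  have "bd K z = (\<lambda>_. 0)"
    using cycle bd_eq_boundary_of_chain[OF V D z] bd_eq_boundary_of_chain[OF V K zK] by simp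
  then obtain c where c: "is_chain K (i + 1) c" and "bd K c = z"
    using acyclic zK unfolding reduced_homology_trivial_def by blast
  then have bc: "boundary V c = z" using bd_eq_boundary_of_chain[OF V K] by simp
  let ?w = "link_chain F c"
  have w: "is_chain (link K F) (i + 1 - int (card F)) ?w"
    by (rule is_chain_link_chain[OF F c])
  have "link_chain F z = (\<lambda>_. 0)"
    using is_chainD(1)[OF z] by (auto simp: link_chain_def deletion_def fun_eq_iff)
  moreover have "boundary V ?w = link_chain F (boundary V c)"
    using boundary_link_chain[OF V F is_chainD(2)[OF c]] by blast
  ultimately have "bd (link K F) ?w = (\<lambda>_. 0)"
    using bc bd_eq_boundary_of_chain[OF V L w] by simp
  then obtain u where u: "is_chain (link K F) (i + 1 - int (card F) + 1) u"
      and "bd (link K F) u = ?w"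
    using acyclic_link w unfolding reduced_homology_trivial_def by blast
  then have bu: "boundary V u = ?w" using bd_eq_boundary_of_chain[OF V L] by simp
  let ?c' = "\<lambda>s. c s - boundary V (star_chain F u) s"
  have c': "is_chain (deletion K F) (i + 1) ?c'" "boundary V ?c' = z"
    using star_correction[where K = K, OF V F closed c u bu] bc by simp_all
  then show "\<exists>c. is_chain (deletion K F) (i + 1) c \<and> bd (deletion K F) c = z"
    using bd_eq_boundary_of_chain[OF V D c'(1)] by auto
qed

section \<open>Independence complexes\<close>

lemma Ind_subset_Pow: "Ind V C \<subseteq> Pow V"
  by (auto simp: Ind_def)

lemma Ind_downward_closed: "s \<in> Ind V C \<Longrightarrow> t \<subseteq> s \<Longrightarrow> t \<in> Ind V C"
  unfolding Ind_def by blast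

lemma Ind_empty: "Ind V {} = Pow V"
  by (auto simp: Ind_def)

lemma Ind_eq_deletion: "F \<in> C \<Longrightarrow> Ind V C = deletion (Ind V (C - {F})) F"
  by (auto simp: Ind_def deletion_def)

lemma is_hypergraph_Diff: "is_hypergraph V C \<Longrightarrow> is_hypergraph V (C - {F})"
  by (auto simp: is_hypergraph_def)

lemma is_hypergraph_finite_edges: "is_hypergraph V C \<Longrightarrow> finite C"
  unfolding is_hypergraph_def by (meson Pow_iff finite_Pow_iff finite_subset subsetI)

lemma mem_nbhd_iff: "x \<in> nbhd C F \<longleftrightarrow> (\<exists>E\<in>C. E - F = {x})"
proof -
  have singleton: "card A = 1 \<and> x \<in> A \<longleftrightarrow> A = {x}" for A :: "'a set"
    by (metis card_1_singleton_iff One_nat_def singletonD singletonI)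
  have "x \<in> nbhd C F \<longleftrightarrow> (\<exists>E\<in>C. card (E - F) = 1 \<and> x \<in> E - F)"
    unfolding nbhd_def by auto
  then show ?thesis by (simp only: singleton)
qed

lemma mem_colon_edges_iff:
  "M \<in> colon_edges C F \<longleftrightarrow>
     (\<exists>E\<in>C - {F}. M = E - F) \<and> (\<forall>E\<in>C - {F}. \<not> E - F \<subset> M) \<and> 2 \<le> card M"
  by (auto simp: colon_edges_def)

lemma colon_edge_or_nbhd_below:
  assumes H: "is_hypergraph V C" and "F \<in> C" "E \<in> C" "E \<noteq> F"
  obtains M where "M \<in> colon_edges C F" "M \<subseteq> E - F"
    | x where "x \<in> nbhd C F" "x \<in> E - F"
proof -
  define fam where "fam = (\<lambda>E. E - F) ` (C - {F})"
  have "finite C" using H by (rule is_hypergraph_finite_edges)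
  then have "finite fam" by (simp add: fam_def)
  moreover have "E - F \<in> fam" using assms by (auto simp: fam_def)
  ultimately have "\<exists>M\<in>fam. M \<subseteq> E - F \<and> (\<forall>M'\<in>fam. M' \<subseteq> M \<longrightarrow> M = M')"
    by (rule finite_has_minimal2)
  then obtain M where M: "M \<in> fam" "M \<subseteq> E - F" and "\<forall>M'\<in>fam. M' \<subseteq> M \<longrightarrow> M = M'"
    by blast
  then have min: "\<forall>M'\<in>fam. \<not> M' \<subset> M" by blast
  from M(1) obtain E' where E': "E' \<in> C" "E' \<noteq> F" "M = E' - F" by (auto simp: fam_def)
  have "E' \<subseteq> V" "\<not> E' \<subseteq> F" "finite V"
    using H E'(1,2) \<open>F \<in> C\<close> unfolding is_hypergraph_def by blast+
  then have "M \<noteq> {}" "finite M"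
    using E'(3) finite_subset by auto
  show thesis
  proof (cases "2 \<le> card M")
    case True
    moreover have "\<forall>E\<in>C - {F}. \<not> E - F \<subset> M" using min unfolding fam_def by blast
    ultimately have "M \<in> colon_edges C F"
      using E' unfolding mem_colon_edges_iff by blast
    then show thesis using M(2) by (rule that(1))
  next
    case False
    with \<open>M \<noteq> {}\<close> \<open>finite M\<close> obtain x where "M = {x}"
      by (metis One_nat_def card_1_singletonE card_0_eq less_2_cases not_le)
    with E' have "x \<in> nbhd C F" unfolding mem_nbhd_iff by blast
    moreover have "x \<in> E - F" using M(2) \<open>M = {x}\<close> by blast
    ultimately show thesis by (rule that(2))
  qed
qed

lemma is_hypergraph_colon:
  assumes H: "is_hypergraph V C" and "F \<in> C"
  shows "is_hypergraph (colon_vertices V C F) (colon_edges C F)"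
  unfolding is_hypergraph_def
proof (intro conjI ballI impI)
  show "finite (colon_vertices V C F)"
    using H by (auto simp: is_hypergraph_def colon_vertices_def)
next
  fix M assume M: "M \<in> colon_edges C F"
  then show "2 \<le> card M" by (simp add: mem_colon_edges_iff)
  obtain E where E: "E \<in> C" "E \<noteq> F" "M = E - F"
    using M by (auto simp: mem_colon_edges_iff)
  have "x \<notin> nbhd C F" if "x \<in> M" for x
  proof
    assume "x \<in> nbhd C F"
    then obtain E' where E': "E' \<in> C" "E' - F = {x}" unfolding mem_nbhd_iff by blast
    then have "E' \<in> C - {F}" by auto
    with M have "\<not> {x} \<subset> M" unfolding mem_colon_edges_iff E'(2)[symmetric] by blast
    moreover have "2 \<le> card M" using M by (simp add: mem_colon_edges_iff)
    ultimately show False using that by auto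
  qed
  moreover have "E \<subseteq> V" using H E(1) unfolding is_hypergraph_def by blast
  ultimately show "M \<subseteq> colon_vertices V C F"
    using E(3) unfolding colon_vertices_def by blast
next
  fix M M' assume M: "M \<in> colon_edges C F" and M': "M' \<in> colon_edges C F" and "M \<subseteq> M'"
  obtain E where "E \<in> C - {F}" "M = E - F"
    using M unfolding mem_colon_edges_iff by blast
  with M' have "\<not> M \<subset> M'" unfolding mem_colon_edges_iff by blast
  with \<open>M \<subseteq> M'\<close> show "M = M'" by blast
qed

lemma Ind_colon_eq_link:
  assumes H: "is_hypergraph V C" and F: "F \<in> C"
  shows "Ind (colon_vertices V C F) (colon_edges C F) = link (Ind V (C - {F})) F"
proof (intro equalityI subsetI)
  fix t assume t: "t \<in> Ind (colon_vertices V C F) (colon_edges C F)"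
  then have tV: "t \<subseteq> V - (F \<union> nbhd C F)" by (auto simp: Ind_def colon_vertices_def)
  have no_edge: "\<not> E \<subseteq> F \<union> t" if "E \<in> C" "E \<noteq> F" for E
  proof
    assume E: "E \<subseteq> F \<union> t"
    from colon_edge_or_nbhd_below[OF H F that] show False
    proof cases
      case (1 M)
      then have "M \<subseteq> t" using E by blast
      with 1 t show False by (auto simp: Ind_def)
    next
      case (2 x)
      then show False using E tV by blast
    qed
  qed
  have "F \<subseteq> V" using H F unfolding is_hypergraph_def by blast
  with tV no_edge have "F \<union> t \<in> Ind V (C - {F})"
    unfolding Ind_def by auto
  moreover have "t \<inter> F = {}" using tV by blast
  ultimately show "t \<in> link (Ind V (C - {F})) F" by (simp add: link_def)
next
  fix t assume "t \<in> link (Ind V (C - {F})) F"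
  then have t: "t \<inter> F = {}" "t \<subseteq> V" and no_edge: "\<And>E. E \<in> C - {F} \<Longrightarrow> \<not> E \<subseteq> F \<union> t"
    by (auto simp: link_def Ind_def)
  have "x \<notin> nbhd C F" if "x \<in> t" for x
  proof
    assume "x \<in> nbhd C F"
    then obtain E where E: "E \<in> C" "E - F = {x}" by (auto simp: mem_nbhd_iff)
    then have "E \<noteq> F" "E \<subseteq> F \<union> t" using that by auto
    with E no_edge show False by blast
  qed
  moreover have "\<not> M \<subseteq> t" if M: "M \<in> colon_edges C F" for M
  proof -
    obtain E where "E \<in> C - {F}" "M = E - F"
      using M unfolding mem_colon_edges_iff by blast
    with no_edge show ?thesis by blast
  qed
  ultimately show "t \<in> Ind (colon_vertices V C F) (colon_edges C F)"
    using t unfolding Ind_def colon_vertices_def by auto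
qed

declare psi.simps [simp del]

lemma psi_obtain_edge:
  assumes H: "is_hypergraph V C" and "V \<noteq> {}" "C \<noteq> {}"
  obtains F where "F \<in> C"
    "psi V C = min (psi V (C - {F}))
                   (psi (colon_vertices V C F) (colon_edges C F) + enat (card F - 1))"
proof -
  let ?f = "\<lambda>F. min (psi V (C - {F}))
                   (psi (colon_vertices V C F) (colon_edges C F) + enat (card F - 1))"
  have "finite C" using H by (rule is_hypergraph_finite_edges)
  then have "Max (?f ` C) \<in> ?f ` C" using assms by (intro Max_in) auto
  moreover have "psi V C = Max (?f ` C)"
    using assms by (subst psi.simps) (auto simp: is_hypergraph_def)
  ultimately show thesis using that by auto
qed

lemma psi_empty_vertices: "psi {} C = 0"
  by (subst psi.simps) simp

lemma enat_nat_le_plus_cancel: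
  "enat (nat (k + int m)) \<le> p + enat m \<Longrightarrow> enat (nat k) \<le> p"
  by (cases p) auto

lemma reduced_homology_trivial_Ind_by_edge:
  assumes H: "is_hypergraph V C" and F: "F \<in> C"
    and acyclic_Diff: "reduced_homology_trivial (Ind V (C - {F})) i"
    and acyclic_colon:
      "reduced_homology_trivial (Ind (colon_vertices V C F) (colon_edges C F)) (i + 1 - int (card F))"
  shows "reduced_homology_trivial (Ind V C) i"
proof -
  have V: "finite V" and FV: "F \<subseteq> V" using H F unfolding is_hypergraph_def by blast+
  from FV V have "finite F" by (rule finite_subset)
  from acyclic_colon have "reduced_homology_trivial (link (Ind V (C - {F})) F) (i + 1 - int (card F))"
    by (simp only: Ind_colon_eq_link[OF H F])
  with acyclic_Diff have "reduced_homology_trivial (deletion (Ind V (C - {F})) F) i"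
    using Ind_downward_closed
    by (intro reduced_homology_trivial_deletion[OF V \<open>finite F\<close> Ind_subset_Pow])
  then show ?thesis by (simp only: Ind_eq_deletion[OF F])
qed

lemma reduced_homology_trivial_Ind:
  assumes "is_hypergraph V C" "enat (nat (i + 2)) \<le> psi V C"
  shows "reduced_homology_trivial (Ind V C) i"
  using assms
proof (induction V C arbitrary: i rule: psi.induct)
  case (1 V C)
  note H = "1.prems"(1)
  have V: "finite V" and guard: "\<not> \<not> (finite V \<and> (\<forall>E\<in>C. E \<subseteq> V \<and> 2 \<le> card E))"
    using H by (auto simp: is_hypergraph_def)
  consider "i \<le> -2" | "V = {}" | "V \<noteq> {}" "C = {}" | "V \<noteq> {}" "C \<noteq> {}"
    by blast
  then show ?case
  proof cases
    case 1
    then show ?thesis by (rule reduced_homology_trivial_below)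
  next
    case 2
    then have "i \<le> -2" using "1.prems"(2) by (simp add: psi_empty_vertices zero_enat_def)
    then show ?thesis by (rule reduced_homology_trivial_below)
  next
    case 3
    then show ?thesis using reduced_homology_trivial_simplex[OF V] by (auto simp: Ind_empty)
  next
    case 4
    obtain F where F: "F \<in> C" and psi_eq: "psi V C = min (psi V (C - {F}))
        (psi (colon_vertices V C F) (colon_edges C F) + enat (card F - 1))"
      using H 4 by (rule psi_obtain_edge)
    have "2 \<le> card F" using H F unfolding is_hypergraph_def by blast
    have "enat (nat (i + 2)) \<le> psi V (C - {F})"
      using "1.prems"(2) psi_eq by (simp only: min.bounded_iff)
    then have "reduced_homology_trivial (Ind V (C - {F})) i"
      by (rule "1.IH"(1)[OF guard 4 F is_hypergraph_Diff[OF H]])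
    moreover have "reduced_homology_trivial (Ind (colon_vertices V C F) (colon_edges C F))
        (i + 1 - int (card F))"
    proof -
      have "i + 1 - int (card F) + 2 + int (card F - 1) = i + 2"
        using \<open>2 \<le> card F\<close> by linarith
      with "1.prems"(2) psi_eq have "enat (nat (i + 1 - int (card F) + 2 + int (card F - 1)))
          \<le> psi (colon_vertices V C F) (colon_edges C F) + enat (card F - 1)"
        by (simp only: min.bounded_iff)
      then have "enat (nat (i + 1 - int (card F) + 2)) \<le> psi (colon_vertices V C F) (colon_edges C F)"
        by (rule enat_nat_le_plus_cancel)
      then show ?thesis
        by (rule "1.IH"(2)[OF guard 4 F is_hypergraph_colon[OF H F]])
    qed
    ultimately show ?thesis by (rule reduced_homology_trivial_Ind_by_edge[OF H F])
  qed
qed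

lemma ereal_le_conn_h:
  "(\<And>i. i \<le> k \<Longrightarrow> reduced_homology_trivial K i) \<Longrightarrow> ereal (real_of_int k) \<le> conn_h K"
  unfolding conn_h_def by (rule Sup_upper) blast

lemma conn_h_eq_infinity:
  assumes "\<And>i. reduced_homology_trivial K i"
  shows "conn_h K = \<infinity>"
proof -
  have le: "ereal (real_of_int k) \<le> conn_h K" for k
    using assms by (intro ereal_le_conn_h)
  show ?thesis
  proof (cases "conn_h K")
    case (real r)
    with le[of "\<lceil>r\<rceil> + 1"] show ?thesis by simp linarith
  next
    case MInf
    with le[of 0] show ?thesis by simp
  qed simp
qed

theorem corollary3p3:
  fixes V :: "'a::linorder set" and C :: "'a set set"
  assumes "is_hypergraph V C"
  shows "conn_h (Ind V C) \<ge> ereal_of_enat (psi V C) - 2"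
proof (cases "psi V C")
  case (enat m)
  then have "ereal (real_of_int (int m - 2)) \<le> conn_h (Ind V C)"
    using reduced_homology_trivial_Ind[OF assms] by (intro ereal_le_conn_h) simp
  with enat show ?thesis by simp
next
  case infinity
  then show ?thesis
    using reduced_homology_trivial_Ind[OF assms] by (simp add: conn_h_eq_infinity)
qed

end
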